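(* The set of non-zero normal elements of $A$ (elements $u\neq0$ with $uA=Au$) is exactly $\{\lambda x^i:\lambda\in\Bbbk^\times,\ i\geq0\}$.
   Context: Let $\Bbbk$ be a field of characteristic zero and $N\geq1$ an integer. Let $A=A_N$ be the $\Bbbk$-algebra generated by $x,y$ subject to the relation $yx-xy=x^N$. *)

theory Defs
  imports Main
begin

text \<open>The free associative algebra k<x,y> is modelled concretely as finitely supported
  functions from words over {x,y} (False = x, True = y) to k, with concatenation product.
  A_N is the quotient by the two-sided ideal generated by yx - xy - x^N; we work with
  representatives and the congruence modulo that ideal.\<close>

type_synonym 'k fa = "bool list \<Rightarrow> 'k"

definition fin :: "'k::zero fa set" where
  "fin = {f. finite {w. f w \<noteq> 0}}"

definition fadd :: "'k::plus fa \<Rightarrow> 'k fa \<Rightarrow> 'k fa" where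
  "fadd f g = (\<lambda>w. f w + g w)"

definition fsub :: "'k::minus fa \<Rightarrow> 'k fa \<Rightarrow> 'k fa" where
  "fsub f g = (\<lambda>w. f w - g w)"

definition fsmul :: "'k::times \<Rightarrow> 'k fa \<Rightarrow> 'k fa" where
  "fsmul c f = (\<lambda>w. c * f w)"

definition fmul :: "'k::comm_semiring_1 fa \<Rightarrow> 'k fa \<Rightarrow> 'k fa" where
  "fmul f g = (\<lambda>w. \<Sum>i\<le>length w. f (take i w) * g (drop i w))"

definition fmon :: "bool list \<Rightarrow> 'k::zero_neq_one fa" where
  "fmon u = (\<lambda>w. if w = u then 1 else 0)"

definition genX :: "'k::zero_neq_one fa" where "genX = fmon [False]"
definition genY :: "'k::zero_neq_one fa" where "genY = fmon [True]"

definition Xpow :: "nat \<Rightarrow> 'k::zero_neq_one fa" where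
  "Xpow i = fmon (replicate i False)"

definition relA :: "nat \<Rightarrow> 'k::comm_ring_1 fa" where
  "relA N = fsub (fsub (fmul genY genX) (fmul genX genY)) (Xpow N)"

inductive_set idealA :: "nat \<Rightarrow> 'k::comm_ring_1 fa set" for N where
  gen: "relA N \<in> idealA N"
| zero: "(\<lambda>_. 0) \<in> idealA N"
| add: "a \<in> idealA N \<Longrightarrow> b \<in> idealA N \<Longrightarrow> fadd a b \<in> idealA N"
| mul: "a \<in> idealA N \<Longrightarrow> p \<in> fin \<Longrightarrow> q \<in> fin \<Longrightarrow> fmul (fmul p a) q \<in> idealA N"

definition eqA :: "nat \<Rightarrow> 'k::comm_ring_1 fa \<Rightarrow> 'k fa \<Rightarrow> bool" where
  "eqA N f g \<longleftrightarrow> fsub f g \<in> idealA N"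

definition normalA :: "nat \<Rightarrow> 'k::comm_ring_1 fa \<Rightarrow> bool" where
  "normalA N u \<longleftrightarrow>
     (\<forall>a\<in>fin. \<exists>b\<in>fin. eqA N (fmul u a) (fmul b u)) \<and>
     (\<forall>a\<in>fin. \<exists>b\<in>fin. eqA N (fmul a u) (fmul u b))"

end

theory Submission
  imports Defs "HOL-Computational_Algebra.Polynomial_Factorial"
begin

text \<open>
  \<open>A\<^sub>N\<close> is the Ore extension \<open>k[x][y; \<delta>]\<close> with \<open>\<delta> = x\<^sup>N d/dx\<close>, realised on \<open>k[x][y]\<close> via
  \<open>y p = p y + \<delta>(p)\<close>. The induced map from the free algebra has the defining ideal as kernel:
  modulo the relation every word reduces to a combination of standard words \<open>x\<^sup>a y\<^sup>j\<close>, on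
  which the map is injective. The Ore extension is graded by the degree in \<open>y\<close> with
  multiplicative leading coefficients.

  If \<open>u \<noteq> 0\<close> is normal, then \<open>x u = u b\<close> forces \<open>b = x\<close>, and if \<open>u\<close> has \<open>y\<close>-degree \<open>n > 0\<close>,
  comparing coefficients of \<open>y\<^sup>n\<^sup>-\<^sup>1\<close> in \<open>u x = x u\<close> gives \<open>n lc(u) x\<^sup>N = 0\<close>; so \<open>u = p(x)\<close>.
  Then \<open>y p = p b'\<close> gives \<open>p | \<delta>(p) = x\<^sup>N p'\<close>; writing \<open>p = x\<^sup>i r\<close> with \<open>x\<close> not dividing \<open>r\<close>, this
  becomes \<open>r | r'\<close>, so \<open>r\<close> is constant. Conversely \<open>x\<^sup>i\<close> is normal because
  \<open>\<delta>(x\<^sup>i) = i x\<^sup>i\<^sup>+\<^sup>N\<^sup>-\<^sup>1\<close> is a multiple of \<open>x\<^sup>i\<close>.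
\<close>

section \<open>The Ore extension \<open>k[x][y; x\<^sup>N d/dx]\<close>\<close>

text \<open>Elements are \<open>'k poly poly\<close>: the outer variable is \<open>y\<close>, coefficients lie in \<open>k[x]\<close>,
  and \<open>\<Sum> p\<^sub>j y\<^sup>j\<close> is the normal form with \<open>x\<close>'s written to the left. \<open>ymult N Q\<close> is the
  product \<open>y Q\<close>, and \<open>ore_mult\<close> the product of the Ore extension.\<close>

definition xder :: "nat \<Rightarrow> 'k::idom poly \<Rightarrow> 'k poly" where
  "xder N p = monom 1 N * pderiv p"

definition ymult :: "nat \<Rightarrow> 'k::idom poly poly \<Rightarrow> 'k poly poly" where
  "ymult N Q = pCons 0 Q + map_poly (xder N) Q"

definition ore_mult :: "nat \<Rightarrow> 'k::idom poly poly \<Rightarrow> 'k poly poly \<Rightarrow> 'k poly poly" where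
  "ore_mult N P Q = (\<Sum>j\<le>degree P. smult (coeff P j) ((ymult N ^^ j) Q))"

lemma smult_sum_right: "smult p (\<Sum>i\<in>S. f i) = (\<Sum>i\<in>S. smult p (f i))"
  by (induction S rule: infinite_finite_induct) (auto simp: smult_add_right)

lemma xder_0 [simp]: "xder N 0 = 0"
  by (simp add: xder_def)

lemma xder_add: "xder N (p + q) = xder N p + xder N q"
  by (simp add: xder_def pderiv_add algebra_simps)

lemma xder_mult: "xder N (p * q) = p * xder N q + xder N p * q"
  by (simp add: xder_def pderiv_mult algebra_simps)

lemma xder_const [simp]: "xder N [:c:] = 0"
  by (simp add: xder_def pderiv_pCons)

lemma xder_x: "xder N (monom 1 (Suc 0)) = monom 1 N"
  by (simp add: xder_def pderiv_monom)

lemma xder_monom: "N \<ge> 1 \<Longrightarrow> xder N (monom c i) = monom (of_nat i) (N - 1) * monom c i"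
  by (cases i) (auto simp: xder_def pderiv_monom mult_monom)

lemma coeff_ymult:
  "coeff (ymult N Q) n = (case n of 0 \<Rightarrow> 0 | Suc m \<Rightarrow> coeff Q m) + xder N (coeff Q n)"
  by (simp add: ymult_def coeff_map_poly coeff_pCons)

lemma ymult_0 [simp]: "ymult N 0 = 0"
  by (rule poly_eqI) (simp add: coeff_ymult split: nat.split)

lemma ymult_add: "ymult N (P + Q) = ymult N P + ymult N Q"
  by (rule poly_eqI) (simp add: coeff_ymult xder_add split: nat.split)

lemma ymult_sum: "ymult N (\<Sum>i\<in>S. f i) = (\<Sum>i\<in>S. ymult N (f i))"
  by (induction S rule: infinite_finite_induct) (auto simp: ymult_add)

lemma ymult_smult: "ymult N (smult p Q) = smult p (ymult N Q) + smult (xder N p) Q"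
  by (rule poly_eqI) (simp add: coeff_ymult xder_mult algebra_simps split: nat.split)

lemma ymult_monom_1: "ymult N (monom 1 j) = monom 1 (Suc j)"
  by (rule poly_eqI) (auto simp: coeff_ymult coeff_monom xder_def split: nat.split)

lemma funpow_ymult_0 [simp]: "(ymult N ^^ j) 0 = 0"
  by (induction j) auto

lemma funpow_ymult_add: "(ymult N ^^ j) (P + Q) = (ymult N ^^ j) P + (ymult N ^^ j) Q"
  by (induction j) (auto simp: ymult_add)

lemma funpow_ymult_smult_const: "(ymult N ^^ j) (smult [:c:] Q) = smult [:c:] ((ymult N ^^ j) Q)"
  by (induction j) (auto simp: ymult_smult)

lemma degree_ymult_le: "degree (ymult N Q) \<le> degree Q + 1"
  unfolding ymult_def
  using degree_pCons_le[of 0 Q] map_poly_degree_leq[of "xder N" Q] by (intro degree_add_le) auto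

lemma coeff_ymult_above_degree: "degree Q \<le> m \<Longrightarrow> coeff (ymult N Q) (Suc m) = coeff Q m"
  by (simp add: coeff_ymult coeff_eq_0)

lemma degree_ymult: "Q \<noteq> 0 \<Longrightarrow> degree (ymult N Q) = Suc (degree Q)"
  using degree_ymult_le[of N Q] coeff_ymult_above_degree[of Q "degree Q" N]
  by (metis Suc_eq_plus1 le_antisym leading_coeff_0_iff le_degree order_refl)

lemma degree_funpow_ymult: "Q \<noteq> 0 \<Longrightarrow> degree ((ymult N ^^ j) Q) = degree Q + j"
proof (induction j)
  case (Suc j)
  then have "(ymult N ^^ j) Q \<noteq> 0"
    by auto
  with Suc show ?case
    by (simp add: degree_ymult)
qed simp

lemma degree_funpow_ymult_le: "degree ((ymult N ^^ j) Q) \<le> degree Q + j"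
  by (cases "Q = 0") (auto simp: degree_funpow_ymult)

lemma coeff_funpow_ymult_top: "coeff ((ymult N ^^ j) Q) (degree Q + j) = lead_coeff Q"
  by (induction j) (simp_all add: coeff_ymult_above_degree degree_funpow_ymult_le)

lemma ore_mult_bound:
  "degree P \<le> n \<Longrightarrow> ore_mult N P Q = (\<Sum>j\<le>n. smult (coeff P j) ((ymult N ^^ j) Q))"
  unfolding ore_mult_def by (rule sum.mono_neutral_left) (auto simp: coeff_eq_0)

lemma ore_mult_0_left [simp]: "ore_mult N 0 Q = 0"
  by (simp add: ore_mult_def)

lemma ore_mult_0_right [simp]: "ore_mult N P 0 = 0"
  by (simp add: ore_mult_def)

lemma ore_mult_const_left: "ore_mult N [:p:] Q = smult p Q"
  by (simp add: ore_mult_def)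

lemma ore_mult_1_left [simp]: "ore_mult N 1 Q = Q"
  by (simp add: ore_mult_def)

lemma ore_mult_y_left: "ore_mult N (monom 1 1) Q = ymult N Q"
  by (simp add: ore_mult_bound[of _ 1] degree_monom_le coeff_monom)

lemma ore_mult_add_left: "ore_mult N (P + P') Q = ore_mult N P Q + ore_mult N P' Q"
proof -
  define n where "n = max (degree P) (degree P')"
  have "degree (P + P') \<le> n"
    unfolding n_def by (rule degree_add_le) auto
  then show ?thesis
    by (simp add: ore_mult_bound[of _ n] n_def sum.distrib smult_add_left)
qed

lemma ore_mult_diff_left: "ore_mult N (P - P') Q = ore_mult N P Q - ore_mult N P' Q"
  using ore_mult_add_left[of N "P - P'" P' Q] by simp

lemma ore_mult_smult_left: "ore_mult N (smult p P) Q = smult p (ore_mult N P Q)"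
  by (simp add: ore_mult_bound[of "smult p P" "degree P"] ore_mult_def smult_sum_right
      degree_smult_le)

lemma ore_mult_sum_left: "ore_mult N (\<Sum>i\<in>S. f i) Q = (\<Sum>i\<in>S. ore_mult N (f i) Q)"
  by (induction S rule: infinite_finite_induct) (auto simp: ore_mult_add_left)

lemma ore_mult_add_right: "ore_mult N P (Q + Q') = ore_mult N P Q + ore_mult N P Q'"
  by (simp add: ore_mult_def funpow_ymult_add smult_add_right sum.distrib)

lemma ore_mult_sum_right: "ore_mult N P (\<Sum>i\<in>S. f i) = (\<Sum>i\<in>S. ore_mult N P (f i))"
  by (induction S rule: infinite_finite_induct) (auto simp: ore_mult_add_right)

lemma ore_mult_smult_const_right: "ore_mult N P (smult [:c:] Q) = smult [:c:] (ore_mult N P Q)"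
  by (simp add: ore_mult_def funpow_ymult_smult_const smult_sum_right mult.commute)

lemma ore_mult_ymult_left: "ore_mult N (ymult N P) Q = ymult N (ore_mult N P Q)"
proof -
  define n where "n = degree P"
  have "degree (ymult N P) \<le> Suc n"
    using degree_ymult_le[of N P] n_def by simp
  then have "ore_mult N (ymult N P) Q
      = (\<Sum>j\<le>Suc n. smult (case j of 0 \<Rightarrow> 0 | Suc m \<Rightarrow> coeff P m) ((ymult N ^^ j) Q))
        + (\<Sum>j\<le>Suc n. smult (xder N (coeff P j)) ((ymult N ^^ j) Q))"
    by (simp add: ore_mult_bound coeff_ymult smult_add_left sum.distrib)
  also have "(\<Sum>j\<le>Suc n. smult (case j of 0 \<Rightarrow> 0 | Suc m \<Rightarrow> coeff P m) ((ymult N ^^ j) Q))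
      = (\<Sum>j\<le>n. smult (coeff P j) ((ymult N ^^ Suc j) Q))"
    by (subst sum.atMost_Suc_shift) simp
  also have "(\<Sum>j\<le>Suc n. smult (xder N (coeff P j)) ((ymult N ^^ j) Q))
      = (\<Sum>j\<le>n. smult (xder N (coeff P j)) ((ymult N ^^ j) Q))"
    by (simp add: n_def coeff_eq_0)
  also have "(\<Sum>j\<le>n. smult (coeff P j) ((ymult N ^^ Suc j) Q))
      + (\<Sum>j\<le>n. smult (xder N (coeff P j)) ((ymult N ^^ j) Q)) = ymult N (ore_mult N P Q)"
    by (simp add: ore_mult_def n_def ymult_sum ymult_smult sum.distrib)
  finally show ?thesis .
qed

lemma coeff_ore_mult_high:
  assumes "k \<ge> degree U + degree B"
  shows "coeff (ore_mult N U B) k = lead_coeff U * coeff ((ymult N ^^ degree U) B) k"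
proof -
  define m where "m = degree U"
  have "coeff (ore_mult N U B) k = (\<Sum>j\<le>m. coeff U j * coeff ((ymult N ^^ j) B) k)"
    by (simp add: ore_mult_def m_def coeff_sum)
  also have "\<dots> = coeff U m * coeff ((ymult N ^^ m) B) k
      + (\<Sum>j\<in>{..m} - {m}. coeff U j * coeff ((ymult N ^^ j) B) k)"
    by (subst sum.remove[of _ m]) auto
  also have "(\<Sum>j\<in>{..m} - {m}. coeff U j * coeff ((ymult N ^^ j) B) k) = 0"
  proof (rule sum.neutral, intro ballI)
    fix j assume "j \<in> {..m} - {m}"
    then have "degree ((ymult N ^^ j) B) < k"
      using degree_funpow_ymult_le[where N=N and j=j and Q=B] assms by (auto simp: m_def)
    then show "coeff U j * coeff ((ymult N ^^ j) B) k = 0"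
      by (simp add: coeff_eq_0)
  qed
  finally show ?thesis
    by (simp add: m_def)
qed

lemma degree_ore_mult:
  assumes U: "U \<noteq> 0" and B: "B \<noteq> 0"
  shows "degree (ore_mult N U B) = degree U + degree B"
    and "lead_coeff (ore_mult N U B) = lead_coeff U * lead_coeff B"
proof -
  have lc: "coeff (ore_mult N U B) (degree U + degree B) = lead_coeff U * lead_coeff B"
    using coeff_ore_mult_high[of U B "degree U + degree B" N]
      coeff_funpow_ymult_top[where N=N and j="degree U" and Q=B]
    by (simp add: add.commute)
  have "degree (ore_mult N U B) \<le> degree U + degree B"
  proof (rule degree_le, intro allI impI)
    fix k assume "degree U + degree B < k"
    then show "coeff (ore_mult N U B) k = 0"
      using coeff_ore_mult_high[of U B k N] degree_funpow_ymult[OF B, where N=N and j="degree U"]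
      by (simp add: coeff_eq_0)
  qed
  moreover have "degree U + degree B \<le> degree (ore_mult N U B)"
    using lc U B by (intro le_degree) simp
  ultimately show "degree (ore_mult N U B) = degree U + degree B"
    by simp
  with lc show "lead_coeff (ore_mult N U B) = lead_coeff U * lead_coeff B"
    by simp
qed

section \<open>Normal elements of the Ore extension\<close>

definition ore_normal :: "nat \<Rightarrow> 'k::idom poly poly \<Rightarrow> bool" where
  "ore_normal N U \<longleftrightarrow>
     (\<forall>A. \<exists>B. ore_mult N U A = ore_mult N B U) \<and> (\<forall>A. \<exists>B. ore_mult N A U = ore_mult N U B)"

lemma coeff_funpow_ymult_x:
  fixes N :: nat
  defines "X \<equiv> [:monom 1 1:] :: 'k::idom poly poly"
  shows "degree ((ymult N ^^ j) X) = j"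
    and "coeff ((ymult N ^^ j) X) j = monom 1 1"
    and "coeff ((ymult N ^^ Suc j) X) j = monom (of_nat (Suc j)) N"
proof -
  have X: "X \<noteq> 0" "degree X = 0" "lead_coeff X = monom 1 1"
    unfolding X_def by auto
  show "degree ((ymult N ^^ j) X) = j" for j
    using degree_funpow_ymult[OF X(1), where N=N and j=j] X by simp
  show lc: "coeff ((ymult N ^^ j) X) j = monom 1 1" for j
    using coeff_funpow_ymult_top[where N=N and j=j and Q=X] X by simp
  show "coeff ((ymult N ^^ Suc j) X) j = monom (of_nat (Suc j)) N"
  proof (induction j)
    case 0
    then show ?case
      using lc[of 0] by (simp add: coeff_ymult xder_x)
  next
    case (Suc j)
    then have "coeff ((ymult N ^^ Suc (Suc j)) X) (Suc j) = monom (of_nat (Suc j)) N + monom 1 N"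
      using lc[of "Suc j"] by (simp add: coeff_ymult xder_x)
    also have "\<dots> = monom (of_nat (Suc (Suc j))) N"
      by (subst add_monom) (simp add: algebra_simps)
    finally show ?case .
  qed
qed

lemma commutes_with_x_imp_degree_0:
  fixes U :: "'k::{idom, ring_char_0} poly poly"
  assumes U: "U \<noteq> 0" and comm: "smult (monom 1 1) U = ore_mult N U [:monom 1 1:]"
  shows "degree U = 0"
proof (rule ccontr)
  assume "degree U \<noteq> 0"
  then obtain n where n: "degree U = Suc n"
    by (cases "degree U") auto
  define X :: "'k poly poly" where "X = [:monom 1 1:]"
  define f where "f j = coeff U j * coeff ((ymult N ^^ j) X) n" for j
  have "(\<Sum>j<n. f j) = 0"
  proof (rule sum.neutral, intro ballI)
    fix j assume "j \<in> {..<n}"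
    moreover have "degree ((ymult N ^^ j) X) = j"
      unfolding X_def by (rule coeff_funpow_ymult_x(1))
    ultimately have "degree ((ymult N ^^ j) X) < n"
      by simp
    then show "f j = 0"
      by (simp add: f_def coeff_eq_0)
  qed
  then have "coeff (ore_mult N U X) n = f n + f (Suc n)"
    by (simp add: ore_mult_def n coeff_sum lessThan_Suc_atMost[symmetric] f_def)
  also have "\<dots> = coeff U n * monom 1 1 + lead_coeff U * monom (of_nat (Suc n)) N"
    using coeff_funpow_ymult_x(2,3)[where 'k='k and N=N and j=n] n unfolding f_def X_def by simp
  finally have "coeff (ore_mult N U X) n
      = coeff U n * monom 1 1 + lead_coeff U * monom (of_nat (Suc n)) N" .
  moreover have "coeff (ore_mult N U X) n = coeff U n * monom 1 1"
    using comm unfolding X_def by (metis coeff_smult mult.commute)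
  ultimately have "lead_coeff U * monom (of_nat (Suc n)) N = 0"
    by simp
  moreover have "monom (of_nat (Suc n) :: 'k) N \<noteq> 0"
    by (simp del: of_nat_Suc)
  ultimately show False
    using U by simp
qed

lemma x_conjugate_eq_x:
  fixes U :: "'k::idom poly poly"
  assumes U: "U \<noteq> 0" and conj: "smult (monom 1 1) U = ore_mult N U B"
  shows "B = [:monom 1 1:]"
proof -
  have "B \<noteq> 0"
    using U conj by auto
  then have "degree (ore_mult N U B) = degree U + degree B"
    and lc: "lead_coeff (ore_mult N U B) = lead_coeff U * lead_coeff B"
    using degree_ore_mult[OF U] by blast+
  moreover have "degree (ore_mult N U B) = degree U"
    and "lead_coeff (ore_mult N U B) = monom 1 1 * lead_coeff U"
    unfolding conj[symmetric] by (simp_all add: degree_smult_eq lead_coeff_smult)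
  ultimately have "degree B = 0" "lead_coeff U * lead_coeff B = lead_coeff U * monom 1 1"
    by (simp_all add: mult.commute)
  then have "degree B = 0" "lead_coeff B = monom 1 1"
    using U by simp_all
  then show ?thesis
    by (metis degree_0_id)
qed

lemma dvd_prime_power_mult_cancel:
  fixes p r s :: "'a::idom"
  assumes p: "prime_elem p" and r: "\<not> p dvd r"
  shows "r dvd p ^ n * s \<Longrightarrow> r dvd s"
proof (induction n arbitrary: s)
  case (Suc n)
  then obtain g where g: "p ^ Suc n * s = r * g"
    by (elim dvdE)
  have "p dvd r * g"
    unfolding g[symmetric] by simp
  then obtain h where h: "g = p * h"
    using p r by (auto simp: prime_elem_dvd_mult_iff elim: dvdE)
  have "p * (p ^ n * s) = p * (r * h)"
    using g h by (simp add: ac_simps)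
  then have "p ^ n * s = r * h"
    using prime_elem_not_zeroI[OF p] by simp
  then show ?case
    by (simp add: Suc.IH)
qed simp

lemma dvd_pderiv_imp_degree_0:
  fixes r :: "'a::{idom, ring_char_0} poly"
  assumes "r dvd pderiv r"
  shows "degree r = 0"
proof (rule ccontr)
  assume deg: "degree r \<noteq> 0"
  then have "pderiv r \<noteq> 0"
    by (simp add: pderiv_eq_0_iff)
  with assms have "degree r \<le> degree (pderiv r)"
    by (rule dvd_imp_degree_le)
  with deg show False
    by (simp add: degree_pderiv)
qed

lemma dvd_xder_imp_monom:
  fixes p :: "'k::field_char_0 poly"
  assumes N: "N \<ge> 1" and p0: "p \<noteq> 0" and dvd: "p dvd xder N p"
  shows "\<exists>c i. c \<noteq> 0 \<and> p = monom c i"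
proof -
  define i where "i = order 0 p"
  obtain r where pr: "p = monom 1 i * r" and nd: "\<not> [:0,1:] dvd r"
    using order_decomp[OF p0, of 0] unfolding i_def monom_altdef smult_1_left by auto
  have "xder N p = monom 1 i * (xder N r + monom (of_nat i) (N - 1) * r)"
    unfolding pr by (simp add: xder_mult xder_monom[OF N] algebra_simps)
  with dvd pr have "r dvd xder N r + monom (of_nat i) (N - 1) * r"
    by simp
  then have "r dvd xder N r"
    by (metis dvd_add_left_iff dvd_triv_right)
  then have "r dvd [:0,1:] ^ N * pderiv r"
    unfolding xder_def monom_altdef smult_1_left .
  moreover have "prime_elem [:0::'k, 1:]"
    by (rule prime_elem_linear_field_poly) simp
  ultimately have "r dvd pderiv r"
    using dvd_prime_power_mult_cancel nd by blast
  then obtain c where "r = [:c:]"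
    by (metis dvd_pderiv_imp_degree_0 degree_eq_zeroE)
  with pr p0 show ?thesis
    by (auto simp: mult.commute smult_monom)
qed

lemma monom_dvd_xder: "N \<ge> 1 \<Longrightarrow> monom c i dvd xder N (monom c i)"
  by (simp add: xder_monom)

lemma const_normal_left:
  fixes q :: "'k::idom poly"
  assumes "q dvd xder N q"
  shows "\<exists>B. ore_mult N [:q:] A = ore_mult N B [:q:]"
proof -
  obtain r where Dq: "xder N q = q * r"
    using assms by (elim dvdE)
  have "\<exists>B. smult q (monom 1 j) = ore_mult N B [:q:]" for j
  proof (induction j)
    case 0
    then show ?case
      by (rule exI[of _ 1]) (simp add: ore_mult_def)
  next
    case (Suc j)
    then obtain B where B: "smult q (monom 1 j) = ore_mult N B [:q:]"
      by blast
    have "smult q (monom 1 (Suc j)) = smult q (ymult N (monom 1 j))"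
      by (simp add: ymult_monom_1)
    also have "\<dots> = ymult N (smult q (monom 1 j)) - smult (xder N q) (monom 1 j)"
      by (simp add: ymult_smult)
    also have "\<dots> = ymult N (smult q (monom 1 j)) - smult r (smult q (monom 1 j))"
      by (simp add: Dq mult.commute)
    also have "\<dots> = ore_mult N (ymult N B - smult r B) [:q:]"
      by (simp add: B ore_mult_diff_left ore_mult_ymult_left ore_mult_smult_left)
    finally show ?case
      by blast
  qed
  then obtain Bj where Bj: "\<And>j. smult q (monom 1 j) = ore_mult N (Bj j) [:q:]"
    by metis
  have "ore_mult N [:q:] A = (\<Sum>j\<le>degree A. smult (coeff A j) (smult q (monom 1 j)))"
    by (subst poly_as_sum_of_monoms[of A, symmetric])
      (simp add: ore_mult_const_left smult_sum_right smult_monom mult.commute)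
  also have "\<dots> = ore_mult N (\<Sum>j\<le>degree A. smult (coeff A j) (Bj j)) [:q:]"
    by (simp add: Bj ore_mult_sum_left ore_mult_smult_left)
  finally show ?thesis
    by blast
qed

lemma const_normal_right:
  fixes q :: "'k::idom poly"
  assumes "q dvd xder N q"
  shows "\<exists>B. ore_mult N A [:q:] = ore_mult N [:q:] B"
proof -
  obtain r where Dq: "xder N q = q * r"
    using assms by (elim dvdE)
  have "\<exists>Z. (ymult N ^^ j) [:q:] = smult q Z" for j
  proof (induction j)
    case 0
    then show ?case
      by (rule exI[of _ 1]) simp
  next
    case (Suc j)
    then obtain Z where "(ymult N ^^ j) [:q:] = smult q Z"
      by blast
    then have "(ymult N ^^ Suc j) [:q:] = smult q (ymult N Z + smult r Z)"
      by (simp add: ymult_smult Dq smult_add_right mult.commute)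
    then show ?case
      by blast
  qed
  then obtain Zj where "\<And>j. (ymult N ^^ j) [:q:] = smult q (Zj j)"
    by metis
  then have "ore_mult N A [:q:] = smult q (\<Sum>j\<le>degree A. smult (coeff A j) (Zj j))"
    by (simp add: ore_mult_def smult_sum_right mult.commute)
  then show ?thesis
    by (auto simp: ore_mult_const_left)
qed

lemma ore_normal_iff:
  fixes U :: "'k::field_char_0 poly poly"
  assumes N: "N \<ge> 1"
  shows "U \<noteq> 0 \<and> ore_normal N U \<longleftrightarrow> (\<exists>c i. c \<noteq> 0 \<and> U = [:monom c i:])"
proof
  assume "U \<noteq> 0 \<and> ore_normal N U"
  then have U: "U \<noteq> 0" and right: "\<And>A. \<exists>B. ore_mult N A U = ore_mult N U B"
    by (auto simp: ore_normal_def)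
  obtain B where xU: "smult (monom 1 1) U = ore_mult N U B"
    using right[of "[:monom 1 1:]"] by (auto simp: ore_mult_const_left)
  moreover from U xU have "B = [:monom 1 1:]"
    by (rule x_conjugate_eq_x)
  ultimately have "degree U = 0"
    using commutes_with_x_imp_degree_0[OF U] by simp
  then obtain p where Up: "U = [:p:]"
    by (metis degree_eq_zeroE)
  obtain B' where "ymult N U = smult p B'"
    using right[of "monom 1 1"] unfolding ore_mult_y_left Up ore_mult_const_left by blast
  then have "coeff (ymult N U) 0 = p * coeff B' 0"
    by simp
  then have "p dvd xder N p"
    by (simp add: coeff_ymult Up)
  moreover have "p \<noteq> 0"
    using U Up by simp
  ultimately obtain c i where "c \<noteq> 0" "p = monom c i"
    using dvd_xder_imp_monom[OF N] by blast
  with Up show "\<exists>c i. c \<noteq> 0 \<and> U = [:monom c i:]"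
    by blast
next
  assume "\<exists>c i. c \<noteq> 0 \<and> U = [:monom c i:]"
  then obtain c i where "c \<noteq> 0" "U = [:monom c i:]"
    by blast
  with monom_dvd_xder[OF N, of c i] show "U \<noteq> 0 \<and> ore_normal N U"
    by (auto simp: ore_normal_def intro: const_normal_left const_normal_right)
qed

lemma fin_fmon [simp]: "fmon w \<in> fin"
proof -
  have "{u. fmon w u \<noteq> (0::'k::zero_neq_one)} \<subseteq> {w}"
    by (auto simp: fmon_def)
  then show ?thesis
    unfolding fin_def by (auto intro: finite_subset)
qed

lemma fin_zero [simp]: "(\<lambda>_. 0) \<in> fin"
  by (simp add: fin_def)

lemma fin_plus: "(f :: 'k::comm_monoid_add fa) \<in> fin \<Longrightarrow> g \<in> fin \<Longrightarrow> (\<lambda>u. f u + g u) \<in> fin"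
  unfolding fin_def mem_Collect_eq
  by (rule finite_subset[of _ "{w. f w \<noteq> 0} \<union> {w. g w \<noteq> 0}"]) auto

lemma fin_scale: "(f :: 'k::mult_zero fa) \<in> fin \<Longrightarrow> (\<lambda>u. c * f u) \<in> fin"
  unfolding fin_def mem_Collect_eq by (rule finite_subset[of _ "{w. f w \<noteq> 0}"]) auto

lemma fin_sum:
  "finite S \<Longrightarrow> (\<And>s. s \<in> S \<Longrightarrow> (F s :: 'k::comm_monoid_add fa) \<in> fin) \<Longrightarrow> (\<lambda>u. \<Sum>s\<in>S. F s u) \<in> fin"
  by (induction S rule: finite_induct) (auto intro: fin_plus)

lemma fin_fadd: "(f :: 'k::comm_monoid_add fa) \<in> fin \<Longrightarrow> g \<in> fin \<Longrightarrow> fadd f g \<in> fin"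
  unfolding fadd_def by (rule fin_plus)

lemma fin_fsmul: "(f :: 'k::mult_zero fa) \<in> fin \<Longrightarrow> fsmul c f \<in> fin"
  unfolding fsmul_def by (rule fin_scale)

lemma fin_fsub: "(f :: 'k::comm_ring_1 fa) \<in> fin \<Longrightarrow> g \<in> fin \<Longrightarrow> fsub f g \<in> fin"
  using fin_plus[OF _ fin_scale[of g "-1"], of f] by (simp add: fsub_def)

lemma fin_eq_sum_fmon:
  "(f :: 'k::comm_semiring_1 fa) \<in> fin \<Longrightarrow> f = (\<lambda>u. \<Sum>w\<in>{w. f w \<noteq> 0}. f w * fmon w u)"
  by (rule ext) (simp add: fmon_def fin_def if_distrib sum.delta' cong: if_cong)

lemma fmul_fmon: "fmul (fmon p) (fmon q) = (fmon (p @ q) :: 'k::comm_semiring_1 fa)"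
proof (rule ext)
  fix w :: "bool list"
  have "(fmon p (take i w) * fmon q (drop i w) :: 'k) = (if i = length p \<and> w = p @ q then 1 else 0)"
    if "i \<le> length w" for i
  proof -
    have iff: "take i w = p \<and> drop i w = q \<longleftrightarrow> i = length p \<and> w = p @ q"
    proof
      assume "take i w = p \<and> drop i w = q"
      with that show "i = length p \<and> w = p @ q"
        by (metis append_take_drop_id length_take min.absorb2)
    qed auto
    have "fmon p (take i w) * fmon q (drop i w)
        = (if take i w = p \<and> drop i w = q then 1 else (0::'k))"
      by (simp add: fmon_def)
    also have "\<dots> = (if i = length p \<and> w = p @ q then 1 else 0)"
      by (simp only: iff)
    finally show ?thesis .
  qed
  then have "fmul (fmon p) (fmon q) w
      = (\<Sum>i\<le>length w. if i = length p \<and> w = p @ q then 1 else 0 :: 'k)"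
    unfolding fmul_def by (intro sum.cong) auto
  also have "\<dots> = fmon (p @ q) w"
    by (auto simp: fmon_def)
  finally show "fmul (fmon p) (fmon q) w = (fmon (p @ q) w :: 'k)" .
qed

lemma fmul_sum_left:
  "fmul (\<lambda>u. \<Sum>s\<in>S. c s * F s u) g = (\<lambda>u. \<Sum>s\<in>S. c s * fmul (F s) g u)"
  unfolding fmul_def
  by (rule ext) (simp add: sum_distrib_left sum_distrib_right mult.assoc sum.swap[of _ S])

lemma fmul_sum_right:
  "fmul g (\<lambda>u. \<Sum>s\<in>S. c s * F s u) = (\<lambda>u. \<Sum>s\<in>S. c s * fmul g (F s) u)"
  unfolding fmul_def
  by (rule ext) (simp add: sum_distrib_left sum_distrib_right mult.left_commute sum.swap[of _ S])

lemma fmul_fsub_left: "fmul (fsub (f :: 'k::comm_ring_1 fa) g) h = fsub (fmul f h) (fmul g h)"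
  unfolding fmul_def fsub_def by (rule ext) (simp add: left_diff_distrib sum_subtractf)

lemma fmul_fsub_right: "fmul h (fsub (f :: 'k::comm_ring_1 fa) g) = fsub (fmul h f) (fmul h g)"
  unfolding fmul_def fsub_def by (rule ext) (simp add: right_diff_distrib sum_subtractf)

lemma fmul_fmon_Nil_right: "fmul h (fmon []) = h"
proof (rule ext)
  fix w :: "bool list"
  have "fmul h (fmon []) w = (\<Sum>i\<le>length w. if i = length w then h w else 0)"
    unfolding fmul_def by (rule sum.cong) (auto simp: fmon_def)
  then show "fmul h (fmon []) w = h w"
    by simp
qed

lemma fmul_fsmul_fmon_Nil_left: "fmul (fsmul c (fmon [])) a = fsmul c a"
proof (rule ext)
  fix w :: "bool list"
  have "fmul (fsmul c (fmon [])) a w = (\<Sum>i\<le>length w. if i = 0 then c * a w else 0)"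
    unfolding fmul_def by (rule sum.cong) (auto simp: fmon_def fsmul_def)
  then show "fmul (fsmul c (fmon [])) a w = fsmul c a w"
    by (simp add: fsmul_def)
qed

lemma fmul_eq_sum_fmon:
  assumes f: "(f :: 'k::comm_semiring_1 fa) \<in> fin" and g: "g \<in> fin"
  shows "fmul f g = (\<lambda>u. \<Sum>w\<in>{w. f w \<noteq> 0}. f w * (\<Sum>v\<in>{v. g v \<noteq> 0}. g v * fmon (w @ v) u))"
proof -
  have "fmul (fmon w) g = (\<lambda>u. \<Sum>v\<in>{v. g v \<noteq> 0}. g v * fmon (w @ v) u)" for w
    by (subst fin_eq_sum_fmon[OF g]) (simp add: fmul_sum_right fmul_fmon)
  then show ?thesis
    by (subst fin_eq_sum_fmon[OF f]) (simp add: fmul_sum_left)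
qed

lemma fin_fmul:
  assumes f: "(f :: 'k::comm_semiring_1 fa) \<in> fin" and g: "g \<in> fin"
  shows "fmul f g \<in> fin"
proof -
  have "finite {w. f w \<noteq> 0}" "finite {w. g w \<noteq> 0}"
    using f g by (simp_all add: fin_def)
  then show ?thesis
    by (subst fmul_eq_sum_fmon[OF f g]) (intro fin_sum fin_scale fin_fmon)
qed

section \<open>The representation of the free algebra on the Ore extension\<close>

primrec ore_word :: "nat \<Rightarrow> bool list \<Rightarrow> 'k::idom poly poly" where
  "ore_word N [] = 1"
| "ore_word N (b # w) = (if b then ymult N (ore_word N w) else smult (monom 1 1) (ore_word N w))"

definition ore_of :: "nat \<Rightarrow> 'k::idom fa \<Rightarrow> 'k poly poly" where
  "ore_of N f = (\<Sum>w\<in>{w. f w \<noteq> 0}. smult [:f w:] (ore_word N w))"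

abbreviation std_word :: "nat \<Rightarrow> nat \<Rightarrow> bool list" where
  "std_word a j \<equiv> replicate a False @ replicate j True"

lemma std_word_inj: "std_word a j = std_word a' j' \<Longrightarrow> a = a' \<and> j = j'"
  by (drule arg_cong[where f="\<lambda>l. (length (filter Not l), length (filter id l))"]) simp

lemma ore_word_append: "ore_word N (w @ v) = ore_mult N (ore_word N w) (ore_word N v)"
  by (induction w) (auto simp: ore_mult_ymult_left ore_mult_smult_left)

lemma ore_word_replicate_False:
  "ore_word N (replicate a False @ v) = smult (monom 1 a) (ore_word N v)"
  by (induction a) (auto simp: mult_monom)

lemma ore_word_replicate_True: "ore_word N (replicate j True) = monom 1 j"
proof (induction j)
  case 0
  then show ?case
    by (simp add: monom_0 one_pCons)
next
  case (Suc j)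
  then show ?case
    by (simp add: ymult_monom_1)
qed

lemma ore_word_std_word: "ore_word N (std_word a j) = monom (monom 1 a) j"
  by (simp add: ore_word_replicate_False ore_word_replicate_True smult_monom)

lemma ore_of_eq_sum:
  "finite W \<Longrightarrow> {w. f w \<noteq> 0} \<subseteq> W \<Longrightarrow> ore_of N f = (\<Sum>w\<in>W. smult [:f w:] (ore_word N w))"
  unfolding ore_of_def by (rule sum.mono_neutral_left) auto

lemma ore_of_zero [simp]: "ore_of N (\<lambda>_. 0) = 0"
  by (simp add: ore_of_def)

lemma ore_of_plus:
  assumes "f \<in> fin" "g \<in> fin"
  shows "ore_of N (\<lambda>u. f u + g u) = ore_of N f + ore_of N g"
proof -
  define W where "W = {w. f w \<noteq> 0} \<union> {w. g w \<noteq> 0}"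
  have W: "finite W"
    using assms by (simp add: W_def fin_def)
  have "ore_of N (\<lambda>u. f u + g u)
      = (\<Sum>w\<in>W. smult [:f w:] (ore_word N w) + smult [:g w:] (ore_word N w))"
    by (subst ore_of_eq_sum[OF W]) (auto simp: W_def simp flip: smult_add_left)
  also have "\<dots> = ore_of N f + ore_of N g"
    by (simp add: sum.distrib ore_of_eq_sum[OF W, of f] ore_of_eq_sum[OF W, of g] W_def)
  finally show ?thesis .
qed

lemma ore_of_scale: "f \<in> fin \<Longrightarrow> ore_of N (\<lambda>u. c * f u) = smult [:c:] (ore_of N f)"
  by (subst ore_of_eq_sum[of "{w. f w \<noteq> 0}"])
    (auto simp: fin_def ore_of_def smult_sum_right ac_simps)

lemma ore_of_sum:
  "finite S \<Longrightarrow> (\<And>s. s \<in> S \<Longrightarrow> F s \<in> fin) \<Longrightarrow> ore_of N (\<lambda>u. \<Sum>s\<in>S. F s u) = (\<Sum>s\<in>S. ore_of N (F s))"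
proof (induction S rule: finite_induct)
  case (insert x S)
  then have "(\<lambda>u. \<Sum>s\<in>S. F s u) \<in> fin"
    by (intro fin_sum) auto
  with insert show ?case
    using ore_of_plus[of "F x" "\<lambda>u. \<Sum>s\<in>S. F s u" N] by simp
qed simp

lemma ore_of_fmon: "ore_of N (fmon w) = ore_word N w"
proof -
  have "{u. fmon w u \<noteq> (0::'k::idom)} = {w}"
    by (auto simp: fmon_def)
  then show ?thesis
    by (simp add: ore_of_def fmon_def one_pCons[symmetric])
qed

lemma ore_of_fadd: "f \<in> fin \<Longrightarrow> g \<in> fin \<Longrightarrow> ore_of N (fadd f g) = ore_of N f + ore_of N g"
  unfolding fadd_def by (rule ore_of_plus)

lemma ore_of_fsmul: "f \<in> fin \<Longrightarrow> ore_of N (fsmul c f) = smult [:c:] (ore_of N f)"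
  unfolding fsmul_def by (rule ore_of_scale)

lemma ore_of_fsub:
  assumes "f \<in> fin" "g \<in> fin"
  shows "ore_of N (fsub f g) = ore_of N f - ore_of N g"
proof -
  have "fsub f g = (\<lambda>u. f u + (-1) * g u)"
    by (rule ext) (simp add: fsub_def)
  moreover have "ore_of N (\<lambda>u. f u + (-1) * g u) = ore_of N f + smult [:-1:] (ore_of N g)"
    using ore_of_plus[OF assms(1) fin_scale[OF assms(2), of "-1"]]
      ore_of_scale[OF assms(2), of N "-1"]
    by simp
  moreover have "smult [:-1:] (ore_of N g) = - ore_of N g"
    by (rule poly_eqI) simp
  ultimately show ?thesis
    by simp
qed

lemma ore_of_fmul:
  assumes f: "f \<in> fin" and g: "g \<in> fin"
  shows "ore_of N (fmul f g) = ore_mult N (ore_of N f) (ore_of N g)"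
proof -
  define Sf where "Sf = {w. f w \<noteq> 0}"
  define Sg where "Sg = {w. g w \<noteq> 0}"
  have fin: "finite Sf" "finite Sg"
    using f g by (auto simp: Sf_def Sg_def fin_def)
  have inner_fin: "(\<lambda>u. \<Sum>v\<in>Sg. g v * fmon (w @ v) u) \<in> fin" for w
    using fin by (intro fin_sum fin_scale fin_fmon)
  have inner: "ore_of N (\<lambda>u. \<Sum>v\<in>Sg. g v * fmon (w @ v) u)
      = (\<Sum>v\<in>Sg. smult [:g v:] (ore_word N (w @ v)))"
    for w using fin by (simp add: ore_of_sum fin_scale ore_of_scale ore_of_fmon)
  have "ore_of N (fmul f g) = (\<Sum>w\<in>Sf. smult [:f w:] (\<Sum>v\<in>Sg. smult [:g v:] (ore_word N (w @ v))))"
    using fin inner_fin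
    by (simp add: fmul_eq_sum_fmon[OF f g] ore_of_sum ore_of_scale inner fin_scale
        flip: Sf_def Sg_def)
  also have "\<dots> = ore_mult N (\<Sum>w\<in>Sf. smult [:f w:] (ore_word N w))
      (\<Sum>v\<in>Sg. smult [:g v:] (ore_word N v))"
    by (simp add: ore_mult_sum_left ore_mult_sum_right ore_mult_smult_left
        ore_mult_smult_const_right ore_word_append smult_sum_right sum.swap[of _ Sf] mult.commute)
  finally show ?thesis
    by (simp add: ore_of_def Sf_def Sg_def)
qed

section \<open>The kernel of the representation is the defining ideal\<close>

lemma relA_eq_fmon:
  "relA N = fsub (fsub (fmon [True, False]) (fmon [False, True]))
     (fmon (replicate N False) :: 'k::comm_ring_1 fa)"
  by (simp add: relA_def genX_def genY_def Xpow_def fmul_fmon)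

lemma ore_of_relA: "ore_of N (relA N :: 'k::idom fa) = 0"
proof -
  have "ore_of N (relA N :: 'k fa)
      = ore_word N [True, False] - ore_word N [False, True] - ore_word N (replicate N False)"
    by (simp add: relA_eq_fmon ore_of_fsub fin_fsub ore_of_fmon)
  also have "\<dots> = 0"
    by (simp add: xder_x ore_word_replicate_False[of _ _ "[]", simplified])
      (simp add: ymult_smult[of N "monom 1 1" "1 :: 'k poly poly", simplified] xder_x)
  finally show ?thesis .
qed

lemma idealA_imp_fin_ore_of_0: "a \<in> idealA N \<Longrightarrow> a \<in> fin \<and> ore_of N a = 0"
proof (induction rule: idealA.induct)
  case gen
  have "relA N \<in> fin"
    by (simp add: relA_eq_fmon fin_fsub)
  with ore_of_relA show ?case
    by blast
qed (simp_all add: fin_fadd ore_of_fadd fin_fmul ore_of_fmul)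

lemma eqA_imp_ore_of_eq: "f \<in> fin \<Longrightarrow> g \<in> fin \<Longrightarrow> eqA N f g \<Longrightarrow> ore_of N f = ore_of N g"
  unfolding eqA_def using idealA_imp_fin_ore_of_0 by (fastforce simp: ore_of_fsub)

lemma idealA_fsmul: "a \<in> idealA N \<Longrightarrow> fsmul c a \<in> idealA N"
  using idealA.mul[of a N "fsmul c (fmon [])" "fmon []"]
  by (simp add: fin_fsmul fmul_fmon_Nil_right fmul_fsmul_fmon_Nil_left)

lemma idealA_fmul_fmon_left: "a \<in> idealA N \<Longrightarrow> fmul (fmon p) a \<in> idealA N"
  using idealA.mul[of a N "fmon p" "fmon []"] by (simp add: fmul_fmon_Nil_right)

lemma idealA_lincomb:
  "finite S \<Longrightarrow> (\<And>s. s \<in> S \<Longrightarrow> F s \<in> idealA N) \<Longrightarrow> (\<lambda>u. \<Sum>s\<in>S. c s * F s u) \<in> idealA N"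
proof (induction S rule: finite_induct)
  case empty
  then show ?case
    using idealA.zero by simp
next
  case (insert x S)
  then have "fadd (fsmul (c x) (F x)) (\<lambda>u. \<Sum>s\<in>S. c s * F s u) \<in> idealA N"
    by (intro idealA.add idealA_fsmul) auto
  with insert show ?case
    by (simp add: fadd_def fsmul_def)
qed

lemma eqA_refl: "eqA N f f"
  using idealA.zero by (simp add: eqA_def fsub_def)

lemma eqA_trans [trans]: "eqA N f g \<Longrightarrow> eqA N g h \<Longrightarrow> eqA N f h"
  unfolding eqA_def by (drule (1) idealA.add) (simp add: fadd_def fsub_def)

lemma eqA_plus: "eqA N f g \<Longrightarrow> eqA N f' g' \<Longrightarrow> eqA N (\<lambda>u. f u + f' u) (\<lambda>u. g u + g' u)"
  unfolding eqA_def by (drule (1) idealA.add) (simp add: fadd_def fsub_def algebra_simps)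

lemma eqA_lincomb:
  assumes "finite S" and "\<And>s. s \<in> S \<Longrightarrow> eqA N (F s) (G s)"
  shows "eqA N (\<lambda>u. \<Sum>s\<in>S. c s * F s u) (\<lambda>u. \<Sum>s\<in>S. c s * G s u)"
proof -
  have "(\<lambda>u. \<Sum>s\<in>S. c s * fsub (F s) (G s) u) \<in> idealA N"
    using assms by (intro idealA_lincomb) (auto simp: eqA_def)
  then show ?thesis
    by (simp add: eqA_def fsub_def right_diff_distrib sum_subtractf)
qed

lemma eqA_fmon_yx:
  "eqA N (fmon (p @ [True, False] @ z) :: 'k::comm_ring_1 fa)
     (\<lambda>u. fmon (p @ [False, True] @ z) u + fmon (p @ replicate N False @ z) u)"
proof -
  have "fmul (fmul (fmon p) (relA N :: 'k fa)) (fmon z) \<in> idealA N"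
    by (rule idealA.mul[OF idealA.gen]) auto
  moreover have "fmul (fmul (fmon p) (relA N)) (fmon z) = fsub (fsub (fmon (p @ [True, False] @ z))
      (fmon (p @ [False, True] @ z))) (fmon (p @ replicate N False @ z) :: 'k fa)"
    by (simp add: relA_eq_fmon fmul_fsub_right fmul_fsub_left fmul_fmon)
  ultimately show ?thesis
    by (simp add: eqA_def fsub_def diff_diff_eq)
qed

lemma eqA_fmon_y_xpow:
  assumes N: "N \<ge> 1"
  shows "eqA N (fmon (p @ True # replicate a False @ v) :: 'k::comm_ring_1 fa)
      (\<lambda>u. fmon (p @ replicate a False @ True # v) u
         + of_nat a * fmon (p @ replicate (a + N - 1) False @ v) u)"
proof (induction a arbitrary: p)
  case 0
  then show ?case
    by (simp add: eqA_refl)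
next
  case (Suc a)
  define A :: "'k fa" where "A = fmon (p @ replicate (Suc a) False @ True # v)"
  define E :: "'k fa" where "E = fmon (p @ replicate (a + N) False @ v)"
  have xN: "replicate N False @ replicate a False @ v = replicate (a + N) False @ v"
    by (simp add: replicate_add[symmetric] add.commute)
  have xN': "False # replicate (a + N - Suc 0) False @ v = replicate (a + N) False @ v"
    using N by (cases N) auto
  have yx: "eqA N (fmon (p @ True # replicate (Suc a) False @ v))
      (\<lambda>u. fmon (p @ [False, True] @ replicate a False @ v) u + E u)"
    using eqA_fmon_yx[of N p "replicate a False @ v"] by (simp add: E_def xN)
  have "eqA N (fmon (p @ [False, True] @ replicate a False @ v)) (\<lambda>u. A u + of_nat a * E u)"
    using Suc.IH[of "p @ [False]"] by (simp add: A_def E_def xN' replicate_append_same)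
  then have "eqA N (\<lambda>u. fmon (p @ [False, True] @ replicate a False @ v) u + E u)
      (\<lambda>u. (A u + of_nat a * E u) + E u)"
    using eqA_refl by (rule eqA_plus)
  with yx have "eqA N (fmon (p @ True # replicate (Suc a) False @ v))
      (\<lambda>u. (A u + of_nat a * E u) + E u)"
    by (rule eqA_trans)
  moreover have "(\<lambda>u. (A u + of_nat a * E u) + E u) = (\<lambda>u. A u + of_nat (Suc a) * E u)"
    by (simp add: fun_eq_iff algebra_simps)
  ultimately show ?case
    by (simp add: A_def E_def)
qed

definition std_supported :: "'k::zero fa \<Rightarrow> bool" where
  "std_supported g \<longleftrightarrow> (\<forall>u. g u \<noteq> 0 \<longrightarrow> (\<exists>a j. u = std_word a j))"

lemma std_supported_fmon: "std_supported (fmon (std_word a j) :: 'k::zero_neq_one fa)"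
proof (unfold std_supported_def, intro allI impI)
  fix u
  assume "fmon (std_word a j) u \<noteq> (0::'k)"
  then have "u = std_word a j"
    by (simp add: fmon_def split: if_splits)
  then show "\<exists>a j. u = std_word a j"
    by blast
qed

lemma std_supported_plus:
  "std_supported (f :: 'k::comm_monoid_add fa) \<Longrightarrow> std_supported g \<Longrightarrow>
    std_supported (\<lambda>u. f u + g u)"
proof (unfold std_supported_def, intro allI impI)
  fix u
  assume "\<forall>u. f u \<noteq> 0 \<longrightarrow> (\<exists>a j. u = std_word a j)" "\<forall>u. g u \<noteq> 0 \<longrightarrow> (\<exists>a j. u = std_word a j)"
    and "f u + g u \<noteq> 0"
  moreover from this(3) have "f u \<noteq> 0 \<or> g u \<noteq> 0"
    by auto
  ultimately show "\<exists>a j. u = std_word a j"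
    by blast
qed

lemma std_supported_lincomb:
  "(\<And>s. s \<in> S \<Longrightarrow> std_supported (H s :: 'k::semiring_0 fa)) \<Longrightarrow>
    std_supported (\<lambda>u. \<Sum>s\<in>S. c s * H s u)"
proof (unfold std_supported_def, intro allI impI)
  fix u
  assume "\<And>s. s \<in> S \<Longrightarrow> \<forall>u. H s u \<noteq> 0 \<longrightarrow> (\<exists>a j. u = std_word a j)"
    and "(\<Sum>s\<in>S. c s * H s u) \<noteq> 0"
  moreover from this(2) obtain s where s: "s \<in> S" "c s * H s u \<noteq> 0"
    by (meson sum.neutral)
  moreover from s(2) have "H s u \<noteq> 0"
    by auto
  ultimately show "\<exists>a j. u = std_word a j"
    by blast
qed

lemma std_supported_scale: "std_supported (f :: 'k::mult_zero fa) \<Longrightarrow> std_supported (\<lambda>u. c * f u)"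
  unfolding std_supported_def by (metis mult_zero_right)

lemma eqA_fmon_cons_std_word:
  assumes N: "N \<ge> 1"
  shows "\<exists>h\<in>fin. std_supported h \<and> eqA N (fmon (b # std_word a j) :: 'k::comm_ring_1 fa) h"
proof (cases b)
  case False
  then have "eqA N (fmon (b # std_word a j)) (fmon (std_word (Suc a) j))"
    by (simp add: eqA_refl)
  then show ?thesis
    using std_supported_fmon fin_fmon by blast
next
  case True
  define h :: "'k fa"
    where "h = (\<lambda>u. fmon (std_word a (Suc j)) u + of_nat a * fmon (std_word (a + N - 1) j) u)"
  have "eqA N (fmon (b # std_word a j)) h"
    using eqA_fmon_y_xpow[OF N, of "[]" a "replicate j True"] True by (simp add: h_def)
  moreover have "h \<in> fin" "std_supported h"
    unfolding h_def by (intro fin_plus fin_scale fin_fmon std_supported_plus std_supported_scale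
        std_supported_fmon)+
  ultimately show ?thesis
    by blast
qed

lemma eqA_fmon_std:
  assumes N: "N \<ge> 1"
  shows "\<exists>g\<in>fin. std_supported g \<and> eqA N (fmon w :: 'k::comm_ring_1 fa) g"
proof (induction w)
  case Nil
  have "std_supported (fmon (std_word 0 0))"
    by (rule std_supported_fmon)
  then show ?case
    using eqA_refl by fastforce
next
  case (Cons b w)
  then obtain g :: "'k fa" where g: "g \<in> fin" "std_supported g" "eqA N (fmon w) g"
    by blast
  define S where "S = {v. g v \<noteq> 0}"
  have S: "finite S"
    using g(1) by (simp add: S_def fin_def)
  have "\<forall>v\<in>S. \<exists>h. h \<in> fin \<and> std_supported h \<and> eqA N (fmon (b # v)) h"
    using g(2) eqA_fmon_cons_std_word[OF N] by (fastforce simp: S_def std_supported_def)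
  then obtain H :: "bool list \<Rightarrow> 'k fa"
    where H: "\<And>v. v \<in> S \<Longrightarrow> H v \<in> fin \<and> std_supported (H v) \<and> eqA N (fmon (b # v)) (H v)"
    by metis
  have "fmul (fmon [b]) (fsub (fmon w) g) \<in> idealA N"
    using g(3) unfolding eqA_def by (rule idealA_fmul_fmon_left)
  then have "eqA N (fmon (b # w)) (fmul (fmon [b]) g)"
    by (simp add: eqA_def fmul_fsub_right fmul_fmon)
  also have "fmul (fmon [b]) g = (\<lambda>u. \<Sum>v\<in>S. g v * fmon (b # v) u)"
    by (subst fin_eq_sum_fmon[OF g(1)]) (simp add: S_def fmul_sum_right fmul_fmon)
  also have "eqA N (\<lambda>u. \<Sum>v\<in>S. g v * fmon (b # v) u) (\<lambda>u. \<Sum>v\<in>S. g v * H v u)"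
    using S H by (intro eqA_lincomb) auto
  finally have "eqA N (fmon (b # w)) (\<lambda>u. \<Sum>v\<in>S. g v * H v u)" .
  moreover have "(\<lambda>u. \<Sum>v\<in>S. g v * H v u) \<in> fin" "std_supported (\<lambda>u. \<Sum>v\<in>S. g v * H v u)"
    using S H by (auto intro!: fin_sum fin_scale std_supported_lincomb)
  ultimately show ?case
    by blast
qed

lemma coeff_ore_of_std_supported:
  assumes g: "g \<in> fin" and std: "std_supported g"
  shows "coeff (coeff (ore_of N g) j) a = g (std_word a j)"
proof -
  define S where "S = {w. g w \<noteq> 0}"
  have S: "finite S"
    using g by (simp add: S_def fin_def)
  have "coeff (coeff (smult [:g w:] (ore_word N w)) j) a = (if w = std_word a j then g w else 0)"
    if "w \<in> S" for w
  proof -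
    from that std have "\<exists>a' j'. w = std_word a' j'"
      by (simp add: S_def std_supported_def)
    then obtain a' j' where w: "w = std_word a' j'"
      by blast
    then have "w = std_word a j \<longleftrightarrow> j' = j \<and> a' = a"
      by (metis std_word_inj)
    with w show ?thesis
      by (simp add: ore_word_std_word coeff_monom)
  qed
  then have "coeff (coeff (ore_of N g) j) a = (\<Sum>w\<in>S. if w = std_word a j then g w else 0)"
    by (simp add: ore_of_def S_def coeff_sum)
  also have "\<dots> = g (std_word a j)"
    using S by (simp add: sum.delta' S_def)
  finally show ?thesis .
qed

lemma std_supported_ore_of_eq_0:
  assumes g: "g \<in> fin" "std_supported g" and g0: "ore_of N g = 0"
  shows "g = (\<lambda>_. 0)"
proof
  fix u
  show "g u = 0"
  proof (rule ccontr)
    assume "g u \<noteq> 0"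
    then obtain a j where "u = std_word a j"
      using g(2) unfolding std_supported_def by blast
    with \<open>g u \<noteq> 0\<close> g0 show False
      using coeff_ore_of_std_supported[OF g, of N j a] by simp
  qed
qed

lemma ore_of_eq_0_imp_idealA:
  assumes N: "N \<ge> 1" and h: "(h :: 'k::idom fa) \<in> fin" and h0: "ore_of N h = 0"
  shows "h \<in> idealA N"
proof -
  define S where "S = {w. h w \<noteq> 0}"
  have S: "finite S"
    using h by (simp add: S_def fin_def)
  obtain G :: "bool list \<Rightarrow> 'k fa"
    where G: "\<And>w. G w \<in> fin \<and> std_supported (G w) \<and> eqA N (fmon w) (G w)"
    using eqA_fmon_std[OF N] by metis
  define g where "g = (\<lambda>u. \<Sum>w\<in>S. h w * G w u)"
  have "eqA N (\<lambda>u. \<Sum>w\<in>S. h w * fmon w u) g"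
    unfolding g_def using S G by (intro eqA_lincomb) auto
  then have hg: "eqA N h g"
    using fin_eq_sum_fmon[OF h] by (simp add: S_def)
  have g: "g \<in> fin" "std_supported g"
    unfolding g_def using S G by (auto intro!: fin_sum fin_scale std_supported_lincomb)
  with h0 have "g = (\<lambda>_. 0)"
    using eqA_imp_ore_of_eq[OF h g(1) hg] by (intro std_supported_ore_of_eq_0) simp_all
  with hg show ?thesis
    by (simp add: eqA_def fsub_def)
qed

lemma eqA_iff_ore_of_eq:
  assumes "N \<ge> 1" "f \<in> fin" "g \<in> fin"
  shows "eqA N f g \<longleftrightarrow> ore_of N f = ore_of N g"
  using eqA_imp_ore_of_eq[OF assms(2,3)] ore_of_eq_0_imp_idealA[OF assms(1) fin_fsub[OF assms(2,3)]]
  by (auto simp: eqA_def ore_of_fsub assms)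

lemma ore_of_surj: "\<exists>f\<in>fin. ore_of N f = P"
proof -
  define F where
    "F j = (\<lambda>u. \<Sum>a\<le>degree (coeff P j). coeff (coeff P j) a * fmon (std_word a j) u)" for j
  have F: "F j \<in> fin" for j
    unfolding F_def by (intro fin_sum fin_scale fin_fmon) auto
  have "ore_of N (F j) = (\<Sum>a\<le>degree (coeff P j). monom (monom (coeff (coeff P j) a) a) j)" for j
    unfolding F_def
    by (simp add: ore_of_sum fin_scale ore_of_scale ore_of_fmon ore_word_std_word smult_monom)
  then have "ore_of N (F j) = monom (coeff P j) j" for j
    by (simp add: monom_sum[symmetric] poly_as_sum_of_monoms)
  then have "ore_of N (\<lambda>u. \<Sum>j\<le>degree P. F j u) = P"
    using F by (simp add: ore_of_sum poly_as_sum_of_monoms)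
  then show ?thesis
    using F by (blast intro: fin_sum)
qed

section \<open>Normal elements of \<open>A\<^sub>N\<close>\<close>

lemma ore_of_fsmul_Xpow: "ore_of N (fsmul c (Xpow i) :: 'k::idom fa) = [:monom c i:]"
  by (simp add: Xpow_def ore_of_fsmul ore_of_fmon ore_word_replicate_False[of _ _ "[]", simplified]
      smult_monom)

lemma ball_bex_fin_ore_of_iff:
  fixes R :: "'k::idom poly poly \<Rightarrow> 'k poly poly \<Rightarrow> bool"
  shows "(\<forall>a\<in>fin. \<exists>b\<in>fin. R (ore_of N a) (ore_of N b)) \<longleftrightarrow> (\<forall>A. \<exists>B. R A B)"
proof (intro iffI allI ballI)
  fix A :: "'k poly poly"
  assume "\<forall>a\<in>fin. \<exists>b\<in>fin. R (ore_of N a) (ore_of N b)"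
  moreover obtain a where "a \<in> fin" "ore_of N a = A"
    using ore_of_surj by blast
  ultimately show "\<exists>B. R A B"
    by blast
next
  fix a :: "'k fa"
  assume "\<forall>A. \<exists>B. R A B"
  then obtain B where "R (ore_of N a) B"
    by blast
  moreover obtain b where "b \<in> fin" "ore_of N b = B"
    using ore_of_surj by blast
  ultimately show "\<exists>b\<in>fin. R (ore_of N a) (ore_of N b)"
    by blast
qed

lemma normalA_iff_ore_normal:
  assumes N: "N \<ge> 1" and u: "u \<in> fin"
  shows "normalA N u \<longleftrightarrow> ore_normal N (ore_of N u)"
proof -
  define U where "U = ore_of N u"
  have "eqA N (fmul u a) (fmul b u) \<longleftrightarrow> ore_mult N U (ore_of N a) = ore_mult N (ore_of N b) U"
    and "eqA N (fmul a u) (fmul u b) \<longleftrightarrow> ore_mult N (ore_of N a) U = ore_mult N U (ore_of N b)"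
    if "a \<in> fin" "b \<in> fin" for a b
    using that u by (simp_all add: U_def eqA_iff_ore_of_eq[OF N] fin_fmul ore_of_fmul)
  then show ?thesis
    unfolding normalA_def ore_normal_def U_def[symmetric]
    using ball_bex_fin_ore_of_iff[where N=N and R="\<lambda>A B. ore_mult N U A = ore_mult N B U"]
      ball_bex_fin_ore_of_iff[where N=N and R="\<lambda>A B. ore_mult N A U = ore_mult N U B"]
    by (simp cong: ball_cong bex_cong)
qed

theorem lemma2p1:
  fixes N :: nat and u :: "'k::field_char_0 fa"
  assumes "N \<ge> 1" and "u \<in> fin"
  shows "(\<not> eqA N u (\<lambda>_. 0) \<and> normalA N u) \<longleftrightarrow>
         (\<exists>(c::'k) (i::nat). c \<noteq> 0 \<and> eqA N u (fsmul c (Xpow i)))"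
proof -
  have "eqA N u (\<lambda>_. 0) \<longleftrightarrow> ore_of N u = 0"
    using eqA_iff_ore_of_eq[OF assms fin_zero] by simp
  moreover have "eqA N u (fsmul c (Xpow i)) \<longleftrightarrow> ore_of N u = [:monom c i:]" for c i
  proof -
    have "fsmul c (Xpow i) \<in> fin"
      unfolding Xpow_def by (intro fin_fsmul fin_fmon)
    then show ?thesis
      by (simp add: eqA_iff_ore_of_eq[OF assms] ore_of_fsmul_Xpow)
  qed
  ultimately show ?thesis
    using normalA_iff_ore_normal[OF assms] ore_normal_iff[OF assms(1), of "ore_of N u"] by simp
qed

end
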